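(* Consider a market with $n$ buyers, $m$ items and $T$ time periods, where item $j$ has per-period supply $s_j^t\ge0$ and overall supply $s_j\ge0$. Every buyer has budget $B_i=1$ and binary valuations $v_{ij}\in\{0,1\}$, and buyer $i$ has per-period demands $d_i^t\ge0$. A feasible allocation is $x=(x_{ij}^t)\ge0$ with $\sum_i x_{ij}^t\le s_j^t$ for all $j,t$ and $\sum_{t,i}x_{ij}^t\le s_j$ for all $j$; let $u_i^t(x_i^t)=\sum_j v_{ij}x_{ij}^t-d_i^t$. Assume there is a feasible allocation with $u_i^t(x_i^t)>0$ for all $i,t$. Then the set of leximin-optimal feasible allocations coincides with the set of maximum Nash welfare allocations, i.e. the optimal solutions of $$\max_{x\ge0}\sum_i\frac1T\sum_t\log\Big(\sum_j v_{ij}x_{ij}^t-d_i^t\Big)\ \text{ over feasible allocations}.$$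
   Context: Leximin order: for vectors $v,\tilde v$ of equal length with nondecreasing rearrangements $v^*,\tilde v^*$, $v$ is leximin-greater than $\tilde v$ if there is $k$ with $v^*_l=\tilde v^*_l$ for $l<k$ and $v^*_k>\tilde v^*_k$. Here a feasible allocation $x$ is leximin-optimal if no feasible $\tilde x$ has the vector $(u_i^t(\tilde x_i^t))_{i,t}$ (indexed by all buyer–period pairs) leximin-greater than $(u_i^t(x_i^t))_{i,t}$. *)

theory Defs
  imports Complex_Main "HOL-Library.Multiset"
begin

definition feasible ::
  "('j \<Rightarrow> 't \<Rightarrow> real) \<Rightarrow> ('j \<Rightarrow> real) \<Rightarrow>
   ('b::finite \<Rightarrow> 'j::finite \<Rightarrow> 't::finite \<Rightarrow> real) \<Rightarrow> bool" where
  "feasible sp s x \<longleftrightarrow>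
     (\<forall>i j t. 0 \<le> x i j t) \<and>
     (\<forall>j t. (\<Sum>i\<in>UNIV. x i j t) \<le> sp j t) \<and>
     (\<forall>j. (\<Sum>t\<in>UNIV. \<Sum>i\<in>UNIV. x i j t) \<le> s j)"

definition util ::
  "('b \<Rightarrow> 'j::finite \<Rightarrow> real) \<Rightarrow> ('b \<Rightarrow> 't \<Rightarrow> real) \<Rightarrow>
   ('b \<Rightarrow> 'j \<Rightarrow> 't \<Rightarrow> real) \<Rightarrow> 'b \<Rightarrow> 't \<Rightarrow> real" where
  "util v d x i t = (\<Sum>j\<in>UNIV. v i j * x i j t) - d i t"

definition sorted_vec :: "('a::finite \<Rightarrow> real) \<Rightarrow> real list" where
  "sorted_vec f = sorted_list_of_multiset (image_mset f (mset_set UNIV))"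

definition leximin_greater :: "('a::finite \<Rightarrow> real) \<Rightarrow> ('a \<Rightarrow> real) \<Rightarrow> bool" where
  "leximin_greater f g \<longleftrightarrow>
     (\<exists>k < length (sorted_vec f).
        (\<forall>l < k. sorted_vec f ! l = sorted_vec g ! l) \<and> sorted_vec f ! k > sorted_vec g ! k)"

definition leximin_optimal ::
  "('b::finite \<Rightarrow> 'j::finite \<Rightarrow> real) \<Rightarrow> ('b \<Rightarrow> 't::finite \<Rightarrow> real) \<Rightarrow>
   ('j \<Rightarrow> 't \<Rightarrow> real) \<Rightarrow> ('j \<Rightarrow> real) \<Rightarrow> ('b \<Rightarrow> 'j \<Rightarrow> 't \<Rightarrow> real) \<Rightarrow> bool" where
  "leximin_optimal v d sp s x \<longleftrightarrow> feasible sp s x \<and>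
     \<not> (\<exists>y. feasible sp s y \<and>
            leximin_greater (\<lambda>(i,t). util v d y i t) (\<lambda>(i,t). util v d x i t))"

text \<open>Nash welfare objective (budgets B_i = 1); only defined (finite) when all utilities
  are positive, otherwise it is -infinity by the usual convention.\<close>
definition nash_welfare ::
  "('b::finite \<Rightarrow> 'j::finite \<Rightarrow> real) \<Rightarrow> ('b \<Rightarrow> 't::finite \<Rightarrow> real) \<Rightarrow>
   ('b \<Rightarrow> 'j \<Rightarrow> 't \<Rightarrow> real) \<Rightarrow> real" where
  "nash_welfare v d x =
     (\<Sum>i\<in>UNIV. (1 / real (card (UNIV :: 't set))) * (\<Sum>t\<in>UNIV. ln (util v d x i t)))"

definition max_nash_welfare ::
  "('b::finite \<Rightarrow> 'j::finite \<Rightarrow> real) \<Rightarrow> ('b \<Rightarrow> 't::finite \<Rightarrow> real) \<Rightarrow>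
   ('j \<Rightarrow> 't \<Rightarrow> real) \<Rightarrow> ('j \<Rightarrow> real) \<Rightarrow> ('b \<Rightarrow> 'j \<Rightarrow> 't \<Rightarrow> real) \<Rightarrow> bool" where
  "max_nash_welfare v d sp s x \<longleftrightarrow>
     feasible sp s x \<and> (\<forall>i t. util v d x i t > 0) \<and>
     (\<forall>y. feasible sp s y \<and> (\<forall>i t. util v d y i t > 0) \<longrightarrow>
          nash_welfare v d y \<le> nash_welfare v d x)"

end

theory Submission
  imports Defs
begin

text \<open>
  Write \<open>u\<^sub>x\<close> for the utilities of an allocation \<open>x\<close>, indexed by buyer-period pairs.
  Both optimality notions are equivalent to a \<^emph>\<open>no lower gain\<close> property: for every level
  \<open>c\<close> and every feasible \<open>y\<close>, the sum of \<open>u\<^sub>y - u\<^sub>x\<close> over the pairs with \<open>u\<^sub>x \<le> c\<close> is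
  nonpositive. For leximin this follows by comparing the sums of \<open>min u c\<close>; for Nash welfare
  from \<open>ln u\<^sub>y \<le> ln u\<^sub>x + (u\<^sub>y - u\<^sub>x) / u\<^sub>x\<close> and Abel summation against the weights
  \<open>1 / u\<^sub>x\<close>, which decrease with the level.

  Conversely, neither kind of optimum admits an improving step at a level \<open>c\<close>: a feasible
  allocation that raises a pair at level at most \<open>c\<close>, either outright or at the expense of
  one pair above \<open>c\<close>, because a short move towards it raises both the leximin vector and
  the Nash welfare. The core of the proof is that without improving steps there is no lower
  gain. Call extra supply of an item in one period, or of an item overall, helpful if it can
  be turned into utility for a pair at level at most \<open>c\<close>. Mixing \<open>x\<close> with the witnesses
  shows, for binary valuations: low pairs find helpful every supply they value; only low pairs
  valuing it receive a helpful period supply; a helpful period supply with slack makes the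
  overall supply helpful; a helpful overall supply is exhausted and helpful in every period
  where it is used. So on helpful supplies \<open>y\<close> gets no more than \<open>x\<close>, and they carry all
  the utility of the low pairs under \<open>x\<close>.
\<close>

section \<open>Comparing utility vectors\<close>

lemma sorted_list_of_multiset_split:
  fixes M :: "real multiset"
  shows "sorted_list_of_multiset M =
    sorted_list_of_multiset {#v \<in># M. v < c#} @ replicate (count M c) c @
    sorted_list_of_multiset {#v \<in># M. c < v#}"
proof -
  have "M = {#v \<in># M. v < c#} + ({#v \<in># M. v = c#} + {#v \<in># M. c < v#})"
    by (rule multiset_eqI) auto
  then have "mset (sorted_list_of_multiset {#v \<in># M. v < c#} @ replicate (count M c) c @
      sorted_list_of_multiset {#v \<in># M. c < v#}) = mset (sorted_list_of_multiset M)"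
    by (simp add: filter_eq_replicate_mset)
  moreover have "sorted (sorted_list_of_multiset {#v \<in># M. v < c#} @ replicate (count M c) c @
      sorted_list_of_multiset {#v \<in># M. c < v#})"
    by (auto simp: sorted_append)
  ultimately show ?thesis
    using properties_for_sort by fastforce
qed

lemma length_sorted_vec [simp]: "length (sorted_vec f) = card (UNIV :: 'a set)"
  for f :: "'a::finite \<Rightarrow> real"
  by (metis sorted_vec_def mset_sorted_list_of_multiset size_image_mset size_mset size_mset_set)

lemma sorted_sorted_vec [simp]: "sorted (sorted_vec f)"
  by (simp add: sorted_vec_def)

lemma leximin_greater_if_fewer_at_level:
  fixes f g :: "'a::finite \<Rightarrow> real"
  assumes agree: "\<And>a. g a < c \<Longrightarrow> f a = g a"
    and above: "\<And>a. c \<le> g a \<Longrightarrow> c \<le> f a"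
    and fewer: "card {a. f a = c} < card {a. g a = c}"
  shows "leximin_greater f g"
proof -
  let ?M = "\<lambda>h :: 'a \<Rightarrow> real. image_mset h (mset_set UNIV)"
  define P where "P = sorted_list_of_multiset {#v \<in># ?M g. v < c#}"
  define R where "R = (\<lambda>h. sorted_list_of_multiset {#v \<in># ?M h. c < v#})"
  have low: "{#v \<in># ?M h. v < c#} = image_mset h (mset_set {a. h a < c})" for h
    by (simp add: filter_mset_image_mset filter_mset_mset_set)
  have "{a. f a < c} = {a. g a < c}"
    by (rule Collect_cong) (metis agree above not_le)
  then have "{#v \<in># ?M f. v < c#} = {#v \<in># ?M g. v < c#}"
    unfolding low using agree by (auto intro: image_mset_cong)
  then have f_split: "sorted_vec f = P @ replicate (card {a. f a = c}) c @ R f"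
    and g_split: "sorted_vec g = P @ replicate (card {a. g a = c}) c @ R g"
    unfolding sorted_vec_def P_def R_def
    by (subst sorted_list_of_multiset_split[of _ c]; simp add: count_image_mset vimage_def)+
  define k where "k = length P + card {a. f a = c}"
  have "length (R f) = length (R g) + (card {a. g a = c} - card {a. f a = c})"
    using arg_cong[OF f_split, of length] arg_cong[OF g_split, of length] fewer by simp
  then have "R f \<noteq> []"
    using fewer by auto
  moreover have "\<forall>v\<in>set (R f). c < v"
    unfolding R_def by simp
  ultimately have "c < sorted_vec f ! k"
    unfolding f_split k_def by (simp add: nth_append hd_conv_nth[symmetric])
  moreover have "sorted_vec g ! k = c"
    unfolding g_split k_def using fewer by (simp add: nth_append)
  moreover have "sorted_vec f ! l = sorted_vec g ! l" if "l < k" for l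
    using that fewer unfolding f_split g_split k_def by (auto simp: nth_append)
  moreover have "k < length (sorted_vec f)"
    using \<open>R f \<noteq> []\<close> unfolding f_split k_def by simp
  ultimately show ?thesis
    unfolding leximin_greater_def by metis
qed

lemma sum_eq_sum_sorted_vec:
  fixes f :: "'a::finite \<Rightarrow> real"
  shows "(\<Sum>a\<in>UNIV. h (f a)) = (\<Sum>l<card (UNIV :: 'a set). h (sorted_vec f ! l))"
proof -
  have "(\<Sum>a\<in>UNIV. h (f a)) = sum_mset (image_mset h (image_mset f (mset_set UNIV)))"
    by (simp add: sum_unfold_sum_mset multiset.map_comp comp_def)
  also have "\<dots> = sum_list (map h (sorted_vec f))"
    unfolding sorted_vec_def by (metis mset_map mset_sorted_list_of_multiset sum_mset_sum_list)
  finally show ?thesis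
    by (simp add: sum_list_sum_nth atLeast0LessThan)
qed

lemma not_leximin_greater_if_min_sums_le:
  fixes f g :: "'a::finite \<Rightarrow> real"
  assumes "\<And>c. (\<Sum>a\<in>UNIV. min (f a) c) \<le> (\<Sum>a\<in>UNIV. min (g a) c)"
  shows "\<not> leximin_greater f g"
proof
  assume "leximin_greater f g"
  then obtain k where k: "k < card (UNIV :: 'a set)"
    and prefix: "\<And>l. l < k \<Longrightarrow> sorted_vec f ! l = sorted_vec g ! l"
    and greater: "sorted_vec g ! k < sorted_vec f ! k"
    unfolding leximin_greater_def by auto
  define c where "c = sorted_vec f ! k"
  have "min (sorted_vec g ! l) c \<le> min (sorted_vec f ! l) c" if "l < card (UNIV :: 'a set)" for l
  proof (cases "l < k")
    case False
    then have "c \<le> sorted_vec f ! l"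
      unfolding c_def using that by (intro sorted_nth_mono) simp_all
    then show ?thesis by simp
  qed (simp add: prefix)
  then have "(\<Sum>l<card (UNIV :: 'a set). min (sorted_vec g ! l) c)
      < (\<Sum>l<card (UNIV :: 'a set). min (sorted_vec f ! l) c)"
    using k greater by (intro sum_strict_mono_ex1 bexI[of _ k]) (auto simp: c_def)
  then show False
    using assms[of c] by (simp add: sum_eq_sum_sorted_vec[of "\<lambda>v. min v c"])
qed

definition no_lower_gain :: "('a::finite \<Rightarrow> real) \<Rightarrow> ('a \<Rightarrow> real) \<Rightarrow> bool" where
  "no_lower_gain g f \<longleftrightarrow> (\<forall>c. (\<Sum>a | f a \<le> c. g a - f a) \<le> 0)"

lemma not_leximin_greater_if_no_lower_gain:
  assumes "no_lower_gain g f"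
  shows "\<not> leximin_greater g f"
proof (rule not_leximin_greater_if_min_sums_le)
  fix c
  have "(\<Sum>a\<in>UNIV. min (g a) c) \<le> (\<Sum>a\<in>UNIV. min (f a) c + (if f a \<le> c then g a - f a else 0))"
    by (intro sum_mono) auto
  also have "\<dots> = (\<Sum>a\<in>UNIV. min (f a) c) + (\<Sum>a | f a \<le> c. g a - f a)"
    by (simp add: sum.distrib sum.If_cases)
  also have "\<dots> \<le> (\<Sum>a\<in>UNIV. min (f a) c)"
    using assms by (simp add: no_lower_gain_def)
  finally show "(\<Sum>a\<in>UNIV. min (g a) c) \<le> (\<Sum>a\<in>UNIV. min (f a) c)" .
qed

text \<open>The proof peels off the least positive weight: the support of \<open>w\<close> is a lower level set
  of \<open>a\<close>, so the peeled part is a nonnegative multiple of a lower sum.\<close>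

lemma weighted_sum_nonpos_if_lower_sums_nonpos:
  fixes a \<delta> w :: "'k::finite \<Rightarrow> real"
  assumes lower: "\<And>c. (\<Sum>k | a k \<le> c. \<delta> k) \<le> 0"
    and nonneg: "\<And>k. 0 \<le> w k"
    and antimono: "\<And>k l. a k \<le> a l \<Longrightarrow> w l \<le> w k"
  shows "(\<Sum>k\<in>UNIV. w k * \<delta> k) \<le> 0"
  using nonneg antimono
proof (induction "card {k. 0 < w k}" arbitrary: w rule: less_induct)
  case less
  define P where "P = {k. 0 < w k}"
  show ?case
  proof (cases "P = {}")
    case True
    then show ?thesis
      using less.prems(1) by (simp add: P_def order.order_iff_strict)
  next
    case False
    have "Min (w ` P) \<in> w ` P" "Max (a ` P) \<in> a ` P"
      using \<open>P \<noteq> {}\<close> by simp_all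
    then obtain k0 k1 where "k0 \<in> P" "w k0 = Min (w ` P)" "k1 \<in> P" "a k1 = Max (a ` P)"
      by (metis imageE)
    then have k0_min: "\<And>k. k \<in> P \<Longrightarrow> w k0 \<le> w k" and k1_max: "\<And>k. k \<in> P \<Longrightarrow> a k \<le> a k1"
      by simp_all
    have P_level: "P = {k. a k \<le> a k1}"
      using k1_max less.prems(2) \<open>k1 \<in> P\<close> by (auto simp: P_def intro: less_le_trans)
    define w' where "w' k = (if k \<in> P then w k - w k0 else 0)" for k
    have "{k. 0 < w' k} \<subseteq> P - {k0}"
      by (auto simp: w'_def split: if_splits)
    then have "card {k. 0 < w' k} < card P"
      using \<open>k0 \<in> P\<close> by (meson card_Diff1_less card_mono finite le_less_trans)
    moreover have "0 \<le> w' k" for k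
      using k0_min by (simp add: w'_def)
    moreover have "w' l \<le> w' k" if "a k \<le> a l" for k l
      using less.prems(2)[OF that] that k0_min unfolding w'_def P_level by auto
    ultimately have "(\<Sum>k\<in>UNIV. w' k * \<delta> k) \<le> 0"
      using less.hyps P_def by blast
    moreover have "w k * \<delta> k = w' k * \<delta> k + (if k \<in> P then w k0 * \<delta> k else 0)" for k
      using less.prems(1)[of k] by (auto simp: w'_def P_def algebra_simps)
    then have "(\<Sum>k\<in>UNIV. w k * \<delta> k) = (\<Sum>k\<in>UNIV. w' k * \<delta> k) + w k0 * (\<Sum>k\<in>P. \<delta> k)"
      by (simp add: sum.distrib sum.If_cases sum_distrib_left)
    moreover have "w k0 * (\<Sum>k\<in>P. \<delta> k) \<le> 0"
      using lower[of "a k1"] less.prems(1)[of k0] unfolding P_level by (simp add: mult_nonneg_nonpos)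
    ultimately show ?thesis
      by linarith
  qed
qed

lemma sum_ln_le_if_no_lower_gain:
  fixes f g :: "'a::finite \<Rightarrow> real"
  assumes f_pos: "\<And>a. 0 < f a" and g_pos: "\<And>a. 0 < g a" and "no_lower_gain g f"
  shows "(\<Sum>a\<in>UNIV. ln (g a)) \<le> (\<Sum>a\<in>UNIV. ln (f a))"
proof -
  have "ln (g a) \<le> ln (f a) + (1 / f a) * (g a - f a)" for a
    using ln_le_minus_one[of "g a / f a"] f_pos[of a] g_pos[of a]
    by (simp add: ln_div field_simps)
  then have "(\<Sum>a\<in>UNIV. ln (g a)) \<le> (\<Sum>a\<in>UNIV. ln (f a)) + (\<Sum>a\<in>UNIV. (1 / f a) * (g a - f a))"
    by (simp add: sum_mono flip: sum.distrib)
  moreover have "(\<Sum>a\<in>UNIV. (1 / f a) * (g a - f a)) \<le> 0"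
    using \<open>no_lower_gain g f\<close> f_pos
    by (intro weighted_sum_nonpos_if_lower_sums_nonpos[where a = f])
      (auto simp: no_lower_gain_def less_imp_le intro: divide_left_mono)
  ultimately show ?thesis
    by linarith
qed

definition elementary_improvement :: "('a \<Rightarrow> real) \<Rightarrow> ('a \<Rightarrow> real) \<Rightarrow> bool" where
  "elementary_improvement f g \<longleftrightarrow> (\<exists>\<delta>>0. \<exists>k. g = f(k := f k + \<delta>) \<or>
     (\<exists>l. f k + \<delta> < f l \<and> g = f(k := f k + \<delta>, l := f l - \<delta>)))"

lemma leximin_greater_if_raise:
  fixes f g :: "'a::finite \<Rightarrow> real"
  assumes raise: "f k < g k"
    and others: "\<And>a. a \<noteq> k \<Longrightarrow> g a = f a \<or> (f k < g a \<and> f k \<le> f a)"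
  shows "leximin_greater g f"
proof (rule leximin_greater_if_fewer_at_level[where c = "f k"])
  show "g a = f a" if "f a < f k" for a
    using that others[of a] by force
  show "f k \<le> g a" if "f k \<le> f a" for a
    using that raise others[of a] by (cases "a = k") auto
  have "{a. g a = f k} \<subseteq> {a. f a = f k} - {k}"
    using raise others by force
  then have "card {a. g a = f k} \<le> card ({a. f a = f k} - {k})"
    by (intro card_mono) auto
  also have "\<dots> < card {a. f a = f k}"
    by (intro card_Diff1_less) auto
  finally show "card {a. g a = f k} < card {a. f a = f k}" .
qed

lemma elementary_improvement_raise: "0 < \<delta> \<Longrightarrow> elementary_improvement f (f(k := f k + \<delta>))"
  unfolding elementary_improvement_def by blast

lemma elementary_improvement_transfer:
  "0 < \<delta> \<Longrightarrow> f k + \<delta> < f l \<Longrightarrow> elementary_improvement f (f(k := f k + \<delta>, l := f l - \<delta>))"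
  unfolding elementary_improvement_def by blast

lemma elementary_improvementE:
  assumes "elementary_improvement f g"
  obtains (raise) \<delta> k where "0 < \<delta>" "g = f(k := f k + \<delta>)"
    | (transfer) \<delta> k l where "0 < \<delta>" "f k + \<delta> < f l" "g = f(k := f k + \<delta>, l := f l - \<delta>)"
  using assms unfolding elementary_improvement_def by blast

lemma leximin_greater_if_elementary_improvement:
  fixes f g :: "'a::finite \<Rightarrow> real"
  assumes "elementary_improvement f g"
  shows "leximin_greater g f"
  using assms
proof (cases rule: elementary_improvementE)
  case (raise \<delta> k)
  then show ?thesis
    by (intro leximin_greater_if_raise[where k = k]) auto
next
  case (transfer \<delta> k l)
  then show ?thesis
    by (intro leximin_greater_if_raise[where k = k]) auto
qed

lemma sum_UNIV_fun_upd:
  fixes f :: "'a::finite \<Rightarrow> 'b"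
  shows "(\<Sum>a\<in>UNIV. h ((f(k := x)) a)) = (\<Sum>a\<in>UNIV. h (f a)) - h (f k) + (h x :: real)"
  by (simp add: sum.remove[of UNIV k])

lemma sum_ln_less_if_elementary_improvement:
  fixes f g :: "'a::finite \<Rightarrow> real"
  assumes f_pos: "\<And>a. 0 < f a" and "elementary_improvement f g"
  shows "(\<forall>a. 0 < g a) \<and> (\<Sum>a\<in>UNIV. ln (f a)) < (\<Sum>a\<in>UNIV. ln (g a))"
  using assms(2)
proof (cases rule: elementary_improvementE)
  case (raise \<delta> k)
  have "ln (f k) < ln (f k + \<delta>)"
    using f_pos[of k] \<open>0 < \<delta>\<close> by simp
  then show ?thesis
    using f_pos \<open>0 < \<delta>\<close> unfolding raise sum_UNIV_fun_upd by (simp add: add_pos_pos)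
next
  case (transfer \<delta> k l)
  then have "k \<noteq> l" and "\<delta> < f l"
    using f_pos[of k] by auto
  have "0 < \<delta> * (f l - f k - \<delta>)"
    using transfer by simp
  then have "f k * f l < (f k + \<delta>) * (f l - \<delta>)"
    by (simp add: algebra_simps)
  moreover have "0 < f k * f l"
    using f_pos[of k] f_pos[of l] by simp
  ultimately have "ln (f k * f l) < ln ((f k + \<delta>) * (f l - \<delta>))"
    by (metis ln_less_cancel_iff less_trans)
  then have "ln (f k) + ln (f l) < ln (f k + \<delta>) + ln (f l - \<delta>)"
    using f_pos[of k] f_pos[of l] transfer by (simp add: ln_mult)
  then show ?thesis
    using \<open>k \<noteq> l\<close> \<open>\<delta> < f l\<close> f_pos transfer unfolding transfer(3) sum_UNIV_fun_upd
    by (auto simp: add_pos_pos)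
qed

definition improving_step :: "real \<Rightarrow> ('a \<Rightarrow> real) \<Rightarrow> ('a \<Rightarrow> real) \<Rightarrow> bool" where
  "improving_step c f g \<longleftrightarrow> (\<exists>\<delta>>0. \<exists>k. f k \<le> c \<and>
     (g = f(k := f k + \<delta>) \<or> (\<exists>l. c < f l \<and> g = f(k := f k + \<delta>, l := f l - \<delta>))))"

lemma improving_step_raise: "0 < \<delta> \<Longrightarrow> f k \<le> c \<Longrightarrow> improving_step c f (f(k := f k + \<delta>))"
  unfolding improving_step_def by blast

lemma improving_step_transfer:
  "0 < \<delta> \<Longrightarrow> f k \<le> c \<Longrightarrow> c < f l \<Longrightarrow> improving_step c f (f(k := f k + \<delta>, l := f l - \<delta>))"
  unfolding improving_step_def by blast

lemma improving_stepE:
  assumes "improving_step c f g"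
  obtains (raise) \<delta> k where "0 < \<delta>" "f k \<le> c" "g = f(k := f k + \<delta>)"
    | (transfer) \<delta> k l where "0 < \<delta>" "f k \<le> c" "c < f l" "g = f(k := f k + \<delta>, l := f l - \<delta>)"
  using assms unfolding improving_step_def by blast

lemma improving_step_if_exchange:
  assumes "0 < \<delta>" "f k \<le> c" "w \<in> {0, 1}" "\<not> (w = 1 \<and> f l \<le> c)"
    and g: "\<And>a. g a = f a + (if a = k then \<delta> else 0) - (if a = l then w * \<delta> else 0)"
  shows "improving_step c f g"
proof (cases "w = 0")
  case True
  then have "g = f(k := f k + \<delta>)"
    using g by (auto simp: fun_eq_iff)
  then show ?thesis
    using improving_step_raise assms(1,2) by simp
next
  case False
  then have "w = 1" "c < f l"
    using assms(3,4) by auto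
  then have "l \<noteq> k" and "g = f(k := f k + \<delta>, l := f l - \<delta>)"
    using g \<open>f k \<le> c\<close> by (auto simp: fun_eq_iff)
  then show ?thesis
    using improving_step_transfer assms(1,2) \<open>c < f l\<close> by simp
qed

lemma elementary_improvement_if_improving_step:
  assumes "improving_step c f g"
  shows "\<exists>\<theta>. 0 < \<theta> \<and> \<theta> \<le> 1 \<and> elementary_improvement f (\<lambda>a. (1 - \<theta>) * f a + \<theta> * g a)"
  using assms
proof (cases rule: improving_stepE)
  case (raise \<delta> k)
  then have "(\<lambda>a. (1 - 1) * f a + 1 * g a) = f(k := f k + \<delta>)"
    by (simp add: fun_eq_iff)
  then have "elementary_improvement f (\<lambda>a. (1 - 1) * f a + 1 * g a)"
    using elementary_improvement_raise[OF \<open>0 < \<delta>\<close>] by metis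
  then show ?thesis
    by (intro exI[of _ 1]) simp
next
  case (transfer \<delta> k l)
  define \<theta> where "\<theta> = min 1 ((f l - f k) / (2 * \<delta>))"
  have "0 < \<theta>" "\<theta> \<le> 1"
    using transfer by (auto simp: \<theta>_def)
  have "\<theta> * \<delta> \<le> (f l - f k) / 2"
    using \<open>0 < \<delta>\<close> mult_right_mono[OF min.cobounded2[of 1 "(f l - f k) / (2 * \<delta>)"], of \<delta>]
    by (simp add: \<theta>_def)
  then have "f k + \<theta> * \<delta> < f l"
    using transfer by (simp add: field_simps)
  moreover have "k \<noteq> l"
    using transfer by auto
  then have "(\<lambda>a. (1 - \<theta>) * f a + \<theta> * g a) = f(k := f k + \<theta> * \<delta>, l := f l - \<theta> * \<delta>)"
    unfolding transfer(4) by (auto simp: fun_eq_iff algebra_simps)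
  ultimately show ?thesis
    using \<open>0 < \<theta>\<close> \<open>\<theta> \<le> 1\<close> \<open>0 < \<delta>\<close> elementary_improvement_transfer[of "\<theta> * \<delta>" f k l]
    by (intro exI[of _ \<theta>]) simp
qed

section \<open>The market\<close>

definition utility_vector ::
  "('b \<Rightarrow> 'j::finite \<Rightarrow> real) \<Rightarrow> ('b \<Rightarrow> 't \<Rightarrow> real) \<Rightarrow> ('b \<Rightarrow> 'j \<Rightarrow> 't \<Rightarrow> real) \<Rightarrow> 'b \<times> 't \<Rightarrow> real"
  where "utility_vector v d x = (\<lambda>(i, t). util v d x i t)"

lemma utility_vector_apply [simp]: "utility_vector v d x (i, t) = util v d x i t"
  by (simp add: utility_vector_def)

lemma nash_welfare_eq_sum_ln:
  fixes x :: "'b::finite \<Rightarrow> 'j::finite \<Rightarrow> 't::finite \<Rightarrow> real"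
  shows "nash_welfare v d x = (\<Sum>p\<in>UNIV. ln (utility_vector v d x p)) / real (card (UNIV :: 't::finite set))"
proof -
  have "(\<Sum>p\<in>UNIV. ln (utility_vector v d x p)) = (\<Sum>i\<in>UNIV. \<Sum>t\<in>UNIV. ln (util v d x i t))"
    unfolding sum.cartesian_product UNIV_Times_UNIV by (simp add: utility_vector_def case_prod_beta)
  then show ?thesis
    by (simp add: nash_welfare_def sum_divide_distrib)
qed

lemma utility_vector_convex:
  "utility_vector v d (\<lambda>i j t. (1 - \<theta>) * x i j t + \<theta> * y i j t)
     = (\<lambda>p. (1 - \<theta>) * utility_vector v d x p + \<theta> * utility_vector v d y p)"
proof -
  have "(\<Sum>j\<in>UNIV. v i j * ((1 - \<theta>) * x i j t + \<theta> * y i j t))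
      = (1 - \<theta>) * (\<Sum>j\<in>UNIV. v i j * x i j t) + \<theta> * (\<Sum>j\<in>UNIV. v i j * y i j t)" for i t
    unfolding sum_distrib_left sum.distrib[symmetric] by (rule sum.cong) (simp_all add: algebra_simps)
  then show ?thesis
    by (auto simp: fun_eq_iff util_def algebra_simps)
qed

lemma utility_vector_add_point:
  "utility_vector v d (\<lambda>i' j' t'. x i' j' t' + (if i' = i \<and> j' = j \<and> t' = t then r else 0))
     = (utility_vector v d x)((i, t) := utility_vector v d x (i, t) + v i j * r)"
  by (auto simp: fun_eq_iff util_def distrib_left sum.distrib if_distrib[of "(*) _"] cong: if_cong)

definition allocated :: "('b::finite \<Rightarrow> 'j \<Rightarrow> 't \<Rightarrow> real) \<Rightarrow> 'j \<Rightarrow> 't \<Rightarrow> real" where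
  "allocated x j t = (\<Sum>i\<in>UNIV. x i j t)"

lemma allocated_add_point:
  "allocated (\<lambda>i' j' t'. x i' j' t' + (if i' = i \<and> j' = j \<and> t' = t then r else 0)) j' t'
     = allocated x j' t' + (if j' = j \<and> t' = t then r else 0)"
  by (cases "j' = j \<and> t' = t") (auto simp: allocated_def sum.distrib)

lemma feasible_iff_allocated:
  "feasible sp s x \<longleftrightarrow> (\<forall>i j t. 0 \<le> x i j t) \<and> (\<forall>j t. allocated x j t \<le> sp j t) \<and>
     (\<forall>j. (\<Sum>t\<in>UNIV. allocated x j t) \<le> s j)"
  by (simp add: feasible_def allocated_def)

text \<open>The use of item \<open>j\<close> in period \<open>t\<close> is covered by \<open>e j t\<close>, which counts against both
  supplies, plus at most \<open>\<alpha> j t\<close> of extra supply that counts against neither; \<open>\<beta> j\<close> is extra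
  overall supply of \<open>j\<close>.\<close>

definition relaxed_feasible ::
  "('j \<Rightarrow> 't \<Rightarrow> real) \<Rightarrow> ('j \<Rightarrow> real) \<Rightarrow> ('j \<Rightarrow> 't \<Rightarrow> real) \<Rightarrow> ('j \<Rightarrow> real) \<Rightarrow>
   ('b::finite \<Rightarrow> 'j \<Rightarrow> 't::finite \<Rightarrow> real) \<Rightarrow> ('j \<Rightarrow> 't \<Rightarrow> real) \<Rightarrow> bool" where
  "relaxed_feasible sp s \<alpha> \<beta> x e \<longleftrightarrow>
     (\<forall>i j t. 0 \<le> x i j t) \<and>
     (\<forall>j t. 0 \<le> e j t \<and> e j t \<le> sp j t \<and> allocated x j t \<le> e j t + \<alpha> j t) \<and>
     (\<forall>j. (\<Sum>t\<in>UNIV. e j t) \<le> s j + \<beta> j)"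

lemma allocated_nonneg: "feasible sp s x \<Longrightarrow> 0 \<le> allocated x j t"
  by (auto simp: feasible_iff_allocated allocated_def intro: sum_nonneg)

lemma relaxed_feasible_if_feasible:
  assumes "feasible sp s x"
  shows "relaxed_feasible sp s (\<lambda>_ _. 0) (\<lambda>j. (\<Sum>t\<in>UNIV. allocated x j t) - s j) x (allocated x)"
  using assms allocated_nonneg[OF assms] by (auto simp: relaxed_feasible_def feasible_iff_allocated)

lemma relaxed_feasible_shift:
  assumes "relaxed_feasible sp s \<alpha> \<beta> x e" "0 \<le> e j t + r" "e j t + r \<le> sp j t"
  shows "relaxed_feasible sp s (\<lambda>j' t'. \<alpha> j' t' - (if j' = j \<and> t' = t then r else 0))
    (\<lambda>j'. \<beta> j' + (if j' = j then r else 0)) x (\<lambda>j' t'. e j' t' + (if j' = j \<and> t' = t then r else 0))"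
  using assms by (auto simp: relaxed_feasible_def sum.distrib)

lemma relaxed_feasible_mono:
  assumes "relaxed_feasible sp s \<alpha> \<beta> x e" "\<And>j t. \<alpha> j t \<le> \<alpha>' j t" "\<And>j. \<beta> j \<le> \<beta>' j"
  shows "relaxed_feasible sp s \<alpha>' \<beta>' x e"
  using assms unfolding relaxed_feasible_def by (meson add_left_mono order_trans)

lemma feasible_if_relaxed_feasible:
  assumes "relaxed_feasible sp s \<alpha> \<beta> x e" "\<And>j t. \<alpha> j t \<le> 0" "\<And>j. \<beta> j \<le> 0"
  shows "feasible sp s x"
proof -
  have "relaxed_feasible sp s (\<lambda>_ _. 0) (\<lambda>_. 0) x e"
    using assms by (rule relaxed_feasible_mono)
  then have "\<forall>i j t. 0 \<le> x i j t" and "allocated x j t \<le> e j t" "e j t \<le> sp j t"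
    and "(\<Sum>t\<in>UNIV. e j t) \<le> s j" for j t
    unfolding relaxed_feasible_def by simp_all
  then show ?thesis
    unfolding feasible_iff_allocated by (meson order_trans sum_mono)
qed

lemma relaxed_feasible_convex:
  assumes rf: "relaxed_feasible sp s \<alpha> \<beta> x e" and rf': "relaxed_feasible sp s \<alpha>' \<beta>' x' e'"
    and "0 \<le> \<theta>" "\<theta> \<le> 1"
  shows "relaxed_feasible sp s (\<lambda>j t. (1 - \<theta>) * \<alpha> j t + \<theta> * \<alpha>' j t) (\<lambda>j. (1 - \<theta>) * \<beta> j + \<theta> * \<beta>' j)
    (\<lambda>i j t. (1 - \<theta>) * x i j t + \<theta> * x' i j t) (\<lambda>j t. (1 - \<theta>) * e j t + \<theta> * e' j t)"
proof -
  have mix_le: "(1 - \<theta>) * a + \<theta> * a' \<le> (1 - \<theta>) * b + \<theta> * b'" if "a \<le> b" "a' \<le> b'" for a a' b b' :: real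
    using that \<open>0 \<le> \<theta>\<close> \<open>\<theta> \<le> 1\<close> by (intro add_mono mult_left_mono) auto
  have mix_nonneg: "0 \<le> (1 - \<theta>) * a + \<theta> * a'" if "0 \<le> a" "0 \<le> a'" for a a' :: real
    using mix_le[OF that] by simp
  have alloc: "allocated (\<lambda>i j t. (1 - \<theta>) * x i j t + \<theta> * x' i j t) j t
      = (1 - \<theta>) * allocated x j t + \<theta> * allocated x' j t" for j t
    by (simp add: allocated_def sum.distrib sum_distrib_left)
  have total: "(\<Sum>t\<in>UNIV. (1 - \<theta>) * e j t + \<theta> * e' j t)
      = (1 - \<theta>) * (\<Sum>t\<in>UNIV. e j t) + \<theta> * (\<Sum>t\<in>UNIV. e' j t)" for j
    by (simp add: sum.distrib sum_distrib_left)
  show ?thesis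
    unfolding relaxed_feasible_def alloc total
  proof (intro conjI allI)
    fix i j t
    show "0 \<le> (1 - \<theta>) * x i j t + \<theta> * x' i j t" "0 \<le> (1 - \<theta>) * e j t + \<theta> * e' j t"
      using rf rf' by (simp_all add: relaxed_feasible_def mix_nonneg)
    show "(1 - \<theta>) * e j t + \<theta> * e' j t \<le> sp j t"
      using rf rf' mix_le[of "e j t" "sp j t" "e' j t" "sp j t"]
      by (simp add: relaxed_feasible_def algebra_simps)
    show "(1 - \<theta>) * allocated x j t + \<theta> * allocated x' j t
        \<le> (1 - \<theta>) * e j t + \<theta> * e' j t + ((1 - \<theta>) * \<alpha> j t + \<theta> * \<alpha>' j t)"
      using rf rf' mix_le[of "allocated x j t" "e j t + \<alpha> j t" "allocated x' j t" "e' j t + \<alpha>' j t"]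
      by (simp add: relaxed_feasible_def algebra_simps)
    show "(1 - \<theta>) * (\<Sum>t\<in>UNIV. e j t) + \<theta> * (\<Sum>t\<in>UNIV. e' j t) \<le> s j + ((1 - \<theta>) * \<beta> j + \<theta> * \<beta>' j)"
      using rf rf' mix_le[of "\<Sum>t\<in>UNIV. e j t" "s j + \<beta> j" "\<Sum>t\<in>UNIV. e' j t" "s j + \<beta>' j"]
      by (simp add: relaxed_feasible_def algebra_simps)
  qed
qed

lemma feasible_convex:
  assumes x: "feasible sp s x" and y: "feasible sp s y" and "0 \<le> \<theta>" "\<theta> \<le> 1"
  shows "feasible sp s (\<lambda>i j t. (1 - \<theta>) * x i j t + \<theta> * y i j t)"
  using relaxed_feasible_convex[OF relaxed_feasible_if_feasible[OF x] relaxed_feasible_if_feasible[OF y]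
      \<open>0 \<le> \<theta>\<close> \<open>\<theta> \<le> 1\<close>]
proof (rule feasible_if_relaxed_feasible)
  fix j
  show "(1 - \<theta>) * ((\<Sum>t\<in>UNIV. allocated x j t) - s j) + \<theta> * ((\<Sum>t\<in>UNIV. allocated y j t) - s j) \<le> 0"
    using x y \<open>0 \<le> \<theta>\<close> \<open>\<theta> \<le> 1\<close>
    by (intro add_nonpos_nonpos mult_nonneg_nonpos) (auto simp: feasible_iff_allocated)
qed simp

definition improvable ::
  "('b::finite \<Rightarrow> 'j::finite \<Rightarrow> real) \<Rightarrow> ('b \<Rightarrow> 't::finite \<Rightarrow> real) \<Rightarrow>
   ('j \<Rightarrow> 't \<Rightarrow> real) \<Rightarrow> ('j \<Rightarrow> real) \<Rightarrow> ('b \<Rightarrow> 'j \<Rightarrow> 't \<Rightarrow> real) \<Rightarrow> real \<Rightarrow> bool" where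
  "improvable v d sp s x c \<longleftrightarrow>
     (\<exists>y. feasible sp s y \<and> improving_step c (utility_vector v d x) (utility_vector v d y))"

lemma elementary_improvement_if_improvable:
  assumes "feasible sp s x" "improvable v d sp s x c"
  shows "\<exists>z. feasible sp s z \<and> elementary_improvement (utility_vector v d x) (utility_vector v d z)"
proof -
  obtain y where "feasible sp s y" "improving_step c (utility_vector v d x) (utility_vector v d y)"
    using assms(2) unfolding improvable_def by blast
  then obtain \<theta> where "0 < \<theta>" "\<theta> \<le> 1"
    and "elementary_improvement (utility_vector v d x)
      (\<lambda>p. (1 - \<theta>) * utility_vector v d x p + \<theta> * utility_vector v d y p)"
    using elementary_improvement_if_improving_step by blast
  then show ?thesis
    using feasible_convex[OF assms(1) \<open>feasible sp s y\<close>] 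
    by (intro exI[of _ "\<lambda>i j t. (1 - \<theta>) * x i j t + \<theta> * y i j t"]) (simp add: utility_vector_convex)
qed

lemma not_improvable_if_leximin_optimal:
  assumes "leximin_optimal v d sp s x"
  shows "\<not> improvable v d sp s x c"
proof
  assume "improvable v d sp s x c"
  then obtain z where "feasible sp s z" "elementary_improvement (utility_vector v d x) (utility_vector v d z)"
    using elementary_improvement_if_improvable assms unfolding leximin_optimal_def by blast
  then show False
    using assms leximin_greater_if_elementary_improvement
    unfolding leximin_optimal_def utility_vector_def by blast
qed

lemma not_improvable_if_max_nash_welfare:
  fixes x :: "'b::finite \<Rightarrow> 'j::finite \<Rightarrow> 't::finite \<Rightarrow> real"
  assumes "max_nash_welfare v d sp s x"
  shows "\<not> improvable v d sp s x c"
proof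
  assume "improvable v d sp s x c"
  then obtain z where "feasible sp s z" and impr: "elementary_improvement (utility_vector v d x) (utility_vector v d z)"
    using elementary_improvement_if_improvable assms unfolding max_nash_welfare_def by blast
  have "\<forall>p. 0 < utility_vector v d x p"
    using assms by (auto simp: max_nash_welfare_def)
  then have "\<forall>p. 0 < utility_vector v d z p"
    and "(\<Sum>p\<in>UNIV. ln (utility_vector v d x p)) < (\<Sum>p\<in>UNIV. ln (utility_vector v d z p))"
    using sum_ln_less_if_elementary_improvement[OF _ impr] by blast+
  then have "nash_welfare v d x < nash_welfare v d z"
    by (simp add: nash_welfare_eq_sum_ln divide_strict_right_mono finite_UNIV_card_ge_0)
  then show False
    using assms \<open>feasible sp s z\<close> \<open>\<forall>p. 0 < utility_vector v d z p\<close>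
    unfolding max_nash_welfare_def by fastforce
qed

text \<open>Some amount \<open>\<epsilon>\<close> of extra supply in direction \<open>(\<alpha>, \<beta>)\<close> can be turned into the same
  amount of utility for one pair at level at most \<open>c\<close>.\<close>

definition extra_supply_helps ::
  "('b::finite \<Rightarrow> 'j::finite \<Rightarrow> real) \<Rightarrow> ('b \<Rightarrow> 't::finite \<Rightarrow> real) \<Rightarrow> ('j \<Rightarrow> 't \<Rightarrow> real) \<Rightarrow>
   ('j \<Rightarrow> real) \<Rightarrow> ('b \<Rightarrow> 'j \<Rightarrow> 't \<Rightarrow> real) \<Rightarrow> real \<Rightarrow> ('j \<Rightarrow> 't \<Rightarrow> real) \<Rightarrow> ('j \<Rightarrow> real) \<Rightarrow> bool" where
  "extra_supply_helps v d sp s x c \<alpha> \<beta> \<longleftrightarrow> (\<exists>\<epsilon>>0. \<exists>y e k. utility_vector v d x k \<le> c \<and>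
     relaxed_feasible sp s (\<lambda>j t. \<epsilon> * \<alpha> j t) (\<lambda>j. \<epsilon> * \<beta> j) y e \<and>
     utility_vector v d y = (utility_vector v d x)(k := utility_vector v d x k + \<epsilon>))"

abbreviation period_supply_helps ::
  "('b::finite \<Rightarrow> 'j::finite \<Rightarrow> real) \<Rightarrow> ('b \<Rightarrow> 't::finite \<Rightarrow> real) \<Rightarrow> ('j \<Rightarrow> 't \<Rightarrow> real) \<Rightarrow>
   ('j \<Rightarrow> real) \<Rightarrow> ('b \<Rightarrow> 'j \<Rightarrow> 't \<Rightarrow> real) \<Rightarrow> real \<Rightarrow> 'j \<Rightarrow> 't \<Rightarrow> bool" where
  "period_supply_helps v d sp s x c j t \<equiv>
     extra_supply_helps v d sp s x c (\<lambda>j' t'. if j' = j \<and> t' = t then 1 else 0) (\<lambda>_. 0)"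

abbreviation total_supply_helps ::
  "('b::finite \<Rightarrow> 'j::finite \<Rightarrow> real) \<Rightarrow> ('b \<Rightarrow> 't::finite \<Rightarrow> real) \<Rightarrow> ('j \<Rightarrow> 't \<Rightarrow> real) \<Rightarrow>
   ('j \<Rightarrow> real) \<Rightarrow> ('b \<Rightarrow> 'j \<Rightarrow> 't \<Rightarrow> real) \<Rightarrow> real \<Rightarrow> 'j \<Rightarrow> bool" where
  "total_supply_helps v d sp s x c j \<equiv>
     extra_supply_helps v d sp s x c (\<lambda>_ _. 0) (\<lambda>j'. if j' = j then 1 else 0)"

text \<open>Each step below mixes \<open>x\<close>, which has slack \<open>a\<close> in some constraint, with a witness
  exceeding it by \<open>\<epsilon>\<close>; with this weight the slack and the excess cancel.\<close>

lemma balancing_weight: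
  fixes a \<epsilon> :: real
  assumes "0 < a" "0 < \<epsilon>"
  shows "\<exists>\<theta>>0. \<theta> \<le> 1 \<and> (1 - \<theta>) * a = \<theta> * \<epsilon>"
  using assms by (intro exI[of _ "a / (a + \<epsilon>)"]) (auto simp: field_simps)

lemma utility_vector_convex_raise:
  assumes "utility_vector v d y = (utility_vector v d x)(k := utility_vector v d x k + \<epsilon>)"
  shows "utility_vector v d (\<lambda>i j t. (1 - \<theta>) * x i j t + \<theta> * y i j t)
    = (utility_vector v d x)(k := utility_vector v d x k + \<theta> * \<epsilon>)"
  unfolding utility_vector_convex assms by (auto simp: fun_eq_iff algebra_simps)

lemma period_supply_helps_if_wanted:
  assumes "feasible sp s x" "utility_vector v d x (i, t) \<le> c" "v i j = 1"
  shows "period_supply_helps v d sp s x c j t"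
proof -
  let ?y = "\<lambda>i' j' t'. x i' j' t' + (if i' = i \<and> j' = j \<and> t' = t then 1 else 0)"
  have "relaxed_feasible sp s (\<lambda>j' t'. 1 * (if j' = j \<and> t' = t then 1 else 0)) (\<lambda>_. 1 * 0) ?y (allocated x)"
    using relaxed_feasible_if_feasible[OF assms(1)] assms(1)
    by (auto simp: relaxed_feasible_def feasible_iff_allocated allocated_add_point)
  moreover have "utility_vector v d ?y = (utility_vector v d x)((i, t) := utility_vector v d x (i, t) + 1)"
    using assms(3) by (simp add: utility_vector_add_point)
  ultimately show ?thesis
    unfolding extra_supply_helps_def using assms(2) zero_less_one by blast
qed

lemma wanted_and_low_if_period_supply_helps:
  assumes feas: "feasible sp s x" and binary: "v i j \<in> {0, 1}"
    and helps: "period_supply_helps v d sp s x c j t"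
    and pos: "0 < x i j t" and not_improvable: "\<not> improvable v d sp s x c"
  shows "v i j = 1 \<and> utility_vector v d x (i, t) \<le> c"
proof (rule ccontr)
  assume wrong: "\<not> (v i j = 1 \<and> utility_vector v d x (i, t) \<le> c)"
  let ?u = "utility_vector v d x"
  obtain \<epsilon> y e k where "0 < \<epsilon>" "?u k \<le> c"
    and rf_y: "relaxed_feasible sp s (\<lambda>j' t'. \<epsilon> * (if j' = j \<and> t' = t then 1 else 0)) (\<lambda>_. \<epsilon> * 0) y e"
    and u_y: "utility_vector v d y = ?u(k := ?u k + \<epsilon>)"
    using helps unfolding extra_supply_helps_def by blast
  obtain \<theta> where "0 < \<theta>" "\<theta> \<le> 1" and balance: "(1 - \<theta>) * x i j t = \<theta> * \<epsilon>"
    using balancing_weight[OF pos \<open>0 < \<epsilon>\<close>] by blast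
  define x0 where "x0 = (\<lambda>i' j' t'. x i' j' t' + (if i' = i \<and> j' = j \<and> t' = t then - x i j t else 0))"
  define z where "z = (\<lambda>i' j' t'. (1 - \<theta>) * x0 i' j' t' + \<theta> * y i' j' t')"
  have "relaxed_feasible sp s (\<lambda>j' t'. if j' = j \<and> t' = t then - x i j t else 0)
      (\<lambda>j'. (\<Sum>t'\<in>UNIV. allocated x j' t') - s j') x0 (allocated x)"
    using relaxed_feasible_if_feasible[OF feas] feas
    by (auto simp: relaxed_feasible_def feasible_iff_allocated x0_def allocated_add_point)
  from relaxed_feasible_convex[OF this rf_y less_imp_le[OF \<open>0 < \<theta>\<close>] \<open>\<theta> \<le> 1\<close>]
  have "feasible sp s z"
    unfolding z_def
    by (rule feasible_if_relaxed_feasible)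
      (use balance feas \<open>\<theta> \<le> 1\<close> in \<open>auto simp: feasible_iff_allocated mult_nonneg_nonpos\<close>)
  have u_z: "utility_vector v d z p
      = ?u p + (if p = k then \<theta> * \<epsilon> else 0) - (if p = (i, t) then v i j * (\<theta> * \<epsilon>) else 0)" for p
    unfolding z_def utility_vector_convex x0_def utility_vector_add_point u_y
    using arg_cong[OF balance, of "(*) (v i j)"] by (auto simp: algebra_simps)
  have "improving_step c ?u (utility_vector v d z)"
    using \<open>0 < \<theta>\<close> \<open>0 < \<epsilon>\<close> \<open>?u k \<le> c\<close> binary wrong u_z
    by (intro improving_step_if_exchange[where l = "(i, t)"]) auto
  then show False
    using not_improvable \<open>feasible sp s z\<close> unfolding improvable_def by blast
qed

lemma total_supply_helps_if_period_slack:
  assumes feas: "feasible sp s x" and helps: "period_supply_helps v d sp s x c j t"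
    and slack: "allocated x j t < sp j t"
  shows "total_supply_helps v d sp s x c j"
proof -
  obtain \<epsilon> y e k where "0 < \<epsilon>" "utility_vector v d x k \<le> c"
    and rf_y: "relaxed_feasible sp s (\<lambda>j' t'. \<epsilon> * (if j' = j \<and> t' = t then 1 else 0)) (\<lambda>_. \<epsilon> * 0) y e"
    and u_y: "utility_vector v d y = (utility_vector v d x)(k := utility_vector v d x k + \<epsilon>)"
    using helps unfolding extra_supply_helps_def by blast
  define a where "a = sp j t - allocated x j t"
  obtain \<theta> where "0 < \<theta>" "\<theta> \<le> 1" and balance: "(1 - \<theta>) * a = \<theta> * \<epsilon>"
    using balancing_weight[of a \<epsilon>] slack \<open>0 < \<epsilon>\<close> by (auto simp: a_def)
  define e0 where "e0 = (\<lambda>j' t'. allocated x j' t' + (if j' = j \<and> t' = t then a else 0))"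
  have rf_x: "relaxed_feasible sp s (\<lambda>j' t'. 0 - (if j' = j \<and> t' = t then a else 0))
      (\<lambda>j'. (\<Sum>t'\<in>UNIV. allocated x j' t') - s j' + (if j' = j then a else 0)) x e0"
    using relaxed_feasible_shift[OF relaxed_feasible_if_feasible[OF feas], of j t a] slack
      allocated_nonneg[OF feas, of j t] by (simp add: a_def e0_def)
  have "relaxed_feasible sp s (\<lambda>j' t'. \<theta> * \<epsilon> * 0) (\<lambda>j'. \<theta> * \<epsilon> * (if j' = j then 1 else 0))
      (\<lambda>i j t. (1 - \<theta>) * x i j t + \<theta> * y i j t) (\<lambda>j t. (1 - \<theta>) * e0 j t + \<theta> * e j t)"
    using relaxed_feasible_convex[OF rf_x rf_y less_imp_le[OF \<open>0 < \<theta>\<close>] \<open>\<theta> \<le> 1\<close>]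
  proof (rule relaxed_feasible_mono)
    fix j'
    have "(1 - \<theta>) * ((\<Sum>t'\<in>UNIV. allocated x j' t') - s j') \<le> 0"
      using feas \<open>\<theta> \<le> 1\<close> by (intro mult_nonneg_nonpos) (auto simp: feasible_iff_allocated)
    then show "(1 - \<theta>) * ((\<Sum>t'\<in>UNIV. allocated x j' t') - s j' + (if j' = j then a else 0)) + \<theta> * (\<epsilon> * 0)
        \<le> \<theta> * \<epsilon> * (if j' = j then 1 else 0)"
      using balance by (auto simp: algebra_simps)
  qed (use balance in \<open>auto simp: algebra_simps\<close>)
  then show ?thesis
    unfolding extra_supply_helps_def using \<open>utility_vector v d x k \<le> c\<close> \<open>0 < \<theta>\<close> \<open>0 < \<epsilon>\<close>
      utility_vector_convex_raise[OF u_y, of \<theta>]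
    by (intro exI[of _ "\<theta> * \<epsilon>"] conjI exI) auto
qed

lemma improvable_if_total_slack:
  assumes feas: "feasible sp s x" and helps: "total_supply_helps v d sp s x c j"
    and slack: "(\<Sum>t\<in>UNIV. allocated x j t) < s j"
  shows "improvable v d sp s x c"
proof -
  obtain \<epsilon> y e k where "0 < \<epsilon>" "utility_vector v d x k \<le> c"
    and rf_y: "relaxed_feasible sp s (\<lambda>_ _. \<epsilon> * 0) (\<lambda>j'. \<epsilon> * (if j' = j then 1 else 0)) y e"
    and u_y: "utility_vector v d y = (utility_vector v d x)(k := utility_vector v d x k + \<epsilon>)"
    using helps unfolding extra_supply_helps_def by blast
  define a where "a = s j - (\<Sum>t\<in>UNIV. allocated x j t)"
  obtain \<theta> where "0 < \<theta>" "\<theta> \<le> 1" and balance: "(1 - \<theta>) * a = \<theta> * \<epsilon>"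
    using balancing_weight[of a \<epsilon>] slack \<open>0 < \<epsilon>\<close> by (auto simp: a_def)
  define z where "z = (\<lambda>i j t. (1 - \<theta>) * x i j t + \<theta> * y i j t)"
  from relaxed_feasible_convex[OF relaxed_feasible_if_feasible[OF feas] rf_y
      less_imp_le[OF \<open>0 < \<theta>\<close>] \<open>\<theta> \<le> 1\<close>]
  have "feasible sp s z"
    unfolding z_def
  proof (rule feasible_if_relaxed_feasible)
    fix j'
    have "(1 - \<theta>) * ((\<Sum>t\<in>UNIV. allocated x j' t) - s j') \<le> 0"
      using feas \<open>\<theta> \<le> 1\<close> by (intro mult_nonneg_nonpos) (auto simp: feasible_iff_allocated)
    then show "(1 - \<theta>) * ((\<Sum>t\<in>UNIV. allocated x j' t) - s j') + \<theta> * (\<epsilon> * (if j' = j then 1 else 0)) \<le> 0"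
      using balance by (auto simp: a_def algebra_simps)
  qed simp
  moreover have "improving_step c (utility_vector v d x) (utility_vector v d z)"
    unfolding z_def utility_vector_convex_raise[OF u_y]
    using \<open>0 < \<theta>\<close> \<open>0 < \<epsilon>\<close> \<open>utility_vector v d x k \<le> c\<close> by (simp add: improving_step_raise)
  ultimately show ?thesis
    unfolding improvable_def by blast
qed

lemma period_supply_helps_if_used:
  assumes feas: "feasible sp s x" and helps: "total_supply_helps v d sp s x c j"
    and used: "0 < allocated x j t"
  shows "period_supply_helps v d sp s x c j t"
proof -
  obtain \<epsilon> y e k where "0 < \<epsilon>" "utility_vector v d x k \<le> c"
    and rf_y: "relaxed_feasible sp s (\<lambda>_ _. \<epsilon> * 0) (\<lambda>j'. \<epsilon> * (if j' = j then 1 else 0)) y e"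
    and u_y: "utility_vector v d y = (utility_vector v d x)(k := utility_vector v d x k + \<epsilon>)"
    using helps unfolding extra_supply_helps_def by blast
  obtain \<theta> where "0 < \<theta>" "\<theta> \<le> 1" and balance: "(1 - \<theta>) * allocated x j t = \<theta> * \<epsilon>"
    using balancing_weight[OF used \<open>0 < \<epsilon>\<close>] by blast
  define e0 where "e0 = (\<lambda>j' t'. allocated x j' t' + (if j' = j \<and> t' = t then - allocated x j t else 0))"
  have "0 \<le> sp j t"
    by (meson feas feasible_iff_allocated allocated_nonneg order_trans)
  then have rf_x: "relaxed_feasible sp s (\<lambda>j' t'. 0 - (if j' = j \<and> t' = t then - allocated x j t else 0))
      (\<lambda>j'. (\<Sum>t'\<in>UNIV. allocated x j' t') - s j' + (if j' = j then - allocated x j t else 0)) x e0"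
    using relaxed_feasible_shift[OF relaxed_feasible_if_feasible[OF feas], of j t "- allocated x j t"]
    by (simp add: e0_def)
  have "relaxed_feasible sp s (\<lambda>j' t'. \<theta> * \<epsilon> * (if j' = j \<and> t' = t then 1 else 0)) (\<lambda>_. \<theta> * \<epsilon> * 0)
      (\<lambda>i j t. (1 - \<theta>) * x i j t + \<theta> * y i j t) (\<lambda>j t. (1 - \<theta>) * e0 j t + \<theta> * e j t)"
    using relaxed_feasible_convex[OF rf_x rf_y less_imp_le[OF \<open>0 < \<theta>\<close>] \<open>\<theta> \<le> 1\<close>]
  proof (rule relaxed_feasible_mono)
    fix j'
    have "(1 - \<theta>) * ((\<Sum>t'\<in>UNIV. allocated x j' t') - s j') \<le> 0"
      using feas \<open>\<theta> \<le> 1\<close> by (intro mult_nonneg_nonpos) (auto simp: feasible_iff_allocated)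
    then show "(1 - \<theta>) * ((\<Sum>t'\<in>UNIV. allocated x j' t') - s j' + (if j' = j then - allocated x j t else 0))
        + \<theta> * (\<epsilon> * (if j' = j then 1 else 0)) \<le> \<theta> * \<epsilon> * 0"
      using balance by (auto simp: algebra_simps)
  qed (use balance in \<open>auto simp: algebra_simps\<close>)
  then show ?thesis
    unfolding extra_supply_helps_def using \<open>utility_vector v d x k \<le> c\<close> \<open>0 < \<theta>\<close> \<open>0 < \<epsilon>\<close>
      utility_vector_convex_raise[OF u_y, of \<theta>]
    by (intro exI[of _ "\<theta> * \<epsilon>"] conjI exI) auto
qed

lemma helped_allocation_le:
  assumes feas: "feasible sp s x" and feas_y: "feasible sp s y"
    and not_improvable: "\<not> improvable v d sp s x c"
  shows "(\<Sum>t | period_supply_helps v d sp s x c j t. allocated y j t)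
    \<le> (\<Sum>t | period_supply_helps v d sp s x c j t. allocated x j t)"
proof (cases "total_supply_helps v d sp s x c j")
  case True
  have "(\<Sum>t | period_supply_helps v d sp s x c j t. allocated y j t) \<le> (\<Sum>t\<in>UNIV. allocated y j t)"
    using allocated_nonneg[OF feas_y] by (intro sum_mono2) auto
  also have "\<dots> \<le> s j"
    using feas_y by (simp add: feasible_iff_allocated)
  also have "\<dots> \<le> (\<Sum>t\<in>UNIV. allocated x j t)"
    using improvable_if_total_slack[OF feas True] not_improvable by fastforce
  also have "\<dots> = (\<Sum>t | period_supply_helps v d sp s x c j t. allocated x j t)"
    using period_supply_helps_if_used[OF feas True] allocated_nonneg[OF feas]
    by (intro sum.mono_neutral_right) (auto simp: order.order_iff_strict)
  finally show ?thesis .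
next
  case False
  have "allocated x j t = sp j t" if "period_supply_helps v d sp s x c j t" for t
    using total_supply_helps_if_period_slack[OF feas that] False feas
    by (meson feasible_iff_allocated order.not_eq_order_implies_strict)
  then show ?thesis
    using feas_y by (intro sum_mono) (auto simp: feasible_iff_allocated)
qed

lemma item_value_to_low_pairs_le:
  fixes x y :: "'b::finite \<Rightarrow> 'j::finite \<Rightarrow> 't::finite \<Rightarrow> real"
  assumes feas: "feasible sp s x" and feas_y: "feasible sp s y" and binary: "\<forall>i j. v i j \<in> {0, 1}"
    and not_improvable: "\<not> improvable v d sp s x c"
  shows "(\<Sum>i\<in>UNIV. \<Sum>t\<in>UNIV. if utility_vector v d x (i, t) \<le> c then v i j * y i j t else 0)
    \<le> (\<Sum>i\<in>UNIV. \<Sum>t\<in>UNIV. if utility_vector v d x (i, t) \<le> c then v i j * x i j t else 0)"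
proof -
  let ?helps = "period_supply_helps v d sp s x c j"
  have helped: "(\<Sum>i\<in>UNIV. \<Sum>t\<in>UNIV. if ?helps t then z i j t else 0) = (\<Sum>t | ?helps t. allocated z j t)"
    for z :: "'b \<Rightarrow> 'j \<Rightarrow> 't \<Rightarrow> real"
    by (simp add: allocated_def sum.swap[of _ "UNIV :: 'b set"] sum.inter_filter[symmetric])
  have "(if utility_vector v d x (i, t) \<le> c then v i j * y i j t else 0) \<le> (if ?helps t then y i j t else 0)"
    for i t
  proof (cases "utility_vector v d x (i, t) \<le> c \<and> v i j = 1")
    case True
    then show ?thesis
      using period_supply_helps_if_wanted[OF feas, of v d i t c j] by simp
  next
    case False
    then have "(if utility_vector v d x (i, t) \<le> c then v i j * y i j t else 0) = 0"
      using binary by auto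
    then show ?thesis
      using feas_y by (simp add: feasible_def)
  qed
  then have "(\<Sum>i\<in>UNIV. \<Sum>t\<in>UNIV. if utility_vector v d x (i, t) \<le> c then v i j * y i j t else 0)
      \<le> (\<Sum>i\<in>UNIV. \<Sum>t\<in>UNIV. if ?helps t then y i j t else 0)"
    by (intro sum_mono)
  also have "\<dots> \<le> (\<Sum>i\<in>UNIV. \<Sum>t\<in>UNIV. if ?helps t then x i j t else 0)"
    unfolding helped using helped_allocation_le[OF feas feas_y not_improvable] .
  also have "\<dots> \<le> (\<Sum>i\<in>UNIV. \<Sum>t\<in>UNIV. if utility_vector v d x (i, t) \<le> c then v i j * x i j t else 0)"
  proof (intro sum_mono)
    fix i t
    show "(if ?helps t then x i j t else 0)
        \<le> (if utility_vector v d x (i, t) \<le> c then v i j * x i j t else 0)"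
    proof (cases "?helps t \<and> 0 < x i j t")
      case True
      then have "v i j = 1 \<and> utility_vector v d x (i, t) \<le> c"
        using wanted_and_low_if_period_supply_helps[OF feas _ _ _ not_improvable] binary by blast
      then show ?thesis
        using True by simp
    next
      case False
      have "0 \<le> x i j t" "0 \<le> v i j"
        using feas binary[rule_format, of i j] by (auto simp: feasible_def)
      then have "(if ?helps t then x i j t else 0) \<le> 0"
        "0 \<le> (if utility_vector v d x (i, t) \<le> c then v i j * x i j t else 0)"
        using False by auto
      then show ?thesis
        by linarith
    qed
  qed
  finally show ?thesis .
qed

lemma sum_utility_vector_filter:
  fixes z :: "'b::finite \<Rightarrow> 'j::finite \<Rightarrow> 't::finite \<Rightarrow> real"
  shows "(\<Sum>p | L p. utility_vector v d z p)
    = (\<Sum>j\<in>UNIV. \<Sum>i\<in>UNIV. \<Sum>t\<in>UNIV. if L (i, t) then v i j * z i j t else 0)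
      - (\<Sum>i\<in>UNIV. \<Sum>t\<in>UNIV. if L (i, t) then d i t else 0)"
proof -
  have "(\<Sum>p | L p. utility_vector v d z p) = (\<Sum>p\<in>UNIV. if L p then utility_vector v d z p else 0)"
    by (simp add: sum.If_cases)
  also have "\<dots> = (\<Sum>i\<in>UNIV. \<Sum>t\<in>UNIV. if L (i, t) then util v d z i t else 0)"
    unfolding utility_vector_def
    by (subst UNIV_Times_UNIV[symmetric]) (simp add: sum.cartesian_product case_prod_beta cong: if_cong)
  also have "\<dots> = (\<Sum>i\<in>UNIV. \<Sum>t\<in>UNIV. \<Sum>j\<in>UNIV. if L (i, t) then v i j * z i j t else 0)
      - (\<Sum>i\<in>UNIV. \<Sum>t\<in>UNIV. if L (i, t) then d i t else 0)"
  proof -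
    have "(if L (i, t) then util v d z i t else 0)
        = (\<Sum>j\<in>UNIV. if L (i, t) then v i j * z i j t else 0) - (if L (i, t) then d i t else 0)" for i t
      by (simp add: util_def)
    then show ?thesis
      by (simp add: sum_subtractf)
  qed
  also have "(\<Sum>i\<in>UNIV. \<Sum>t\<in>UNIV. \<Sum>j\<in>UNIV. if L (i, t) then v i j * z i j t else 0)
      = (\<Sum>j\<in>UNIV. \<Sum>i\<in>UNIV. \<Sum>t\<in>UNIV. if L (i, t) then v i j * z i j t else 0)"
    by (subst sum.swap) (rule sum.swap)
  finally show ?thesis .
qed

lemma no_lower_gain_if_not_improvable:
  fixes x y :: "'b::finite \<Rightarrow> 'j::finite \<Rightarrow> 't::finite \<Rightarrow> real"
  assumes feas: "feasible sp s x" and binary: "\<forall>i j. v i j \<in> {0, 1}"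
    and not_improvable: "\<And>c. \<not> improvable v d sp s x c" and feas_y: "feasible sp s y"
  shows "no_lower_gain (utility_vector v d y) (utility_vector v d x)"
  unfolding no_lower_gain_def
proof
  fix c
  have "(\<Sum>j\<in>UNIV. \<Sum>i\<in>UNIV. \<Sum>t\<in>UNIV. if utility_vector v d x (i, t) \<le> c then v i j * y i j t else 0)
      \<le> (\<Sum>j\<in>UNIV. \<Sum>i\<in>UNIV. \<Sum>t\<in>UNIV. if utility_vector v d x (i, t) \<le> c then v i j * x i j t else 0)"
    using item_value_to_low_pairs_le[OF feas feas_y binary not_improvable] by (rule sum_mono)
  then show "(\<Sum>p | utility_vector v d x p \<le> c. utility_vector v d y p - utility_vector v d x p) \<le> 0"
    by (simp add: sum_subtractf sum_utility_vector_filter[where L = "\<lambda>p. utility_vector v d x p \<le> c"])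
qed

lemma utility_pos_if_leximin_optimal:
  assumes opt: "leximin_optimal v d sp s x"
    and pos: "\<exists>y. feasible sp s y \<and> (\<forall>i t. 0 < util v d y i t)"
  shows "\<forall>i t. 0 < util v d x i t"
proof (rule ccontr)
  let ?u = "utility_vector v d x"
  assume "\<not> (\<forall>i t. 0 < util v d x i t)"
  then obtain p where "?u p \<le> 0"
    by (auto simp: not_less)
  have "Min (range ?u) \<in> range ?u"
    by (simp add: Min_in)
  then obtain k where k: "?u k = Min (range ?u)"
    by (metis imageE)
  have k_min: "?u k \<le> ?u a" for a
    unfolding k by (rule Min_le) (simp, rule rangeI)
  obtain y where "feasible sp s y" and y_pos: "\<And>a. 0 < utility_vector v d y a"
    using pos by (auto simp: utility_vector_def)
  have "?u k < utility_vector v d y a" for a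
    using k_min[of p] \<open>?u p \<le> 0\<close> y_pos[of a] by linarith
  then have "leximin_greater (utility_vector v d y) ?u"
    using k_min by (intro leximin_greater_if_raise[where k = k]) auto
  then show False
    using opt \<open>feasible sp s y\<close> unfolding leximin_optimal_def utility_vector_def by blast
qed

lemma max_nash_welfare_if_no_lower_gain:
  fixes x :: "'b::finite \<Rightarrow> 'j::finite \<Rightarrow> 't::finite \<Rightarrow> real"
  assumes "feasible sp s x" and pos: "\<forall>i t. 0 < util v d x i t"
    and no_gain: "\<And>y. feasible sp s y \<Longrightarrow> no_lower_gain (utility_vector v d y) (utility_vector v d x)"
  shows "max_nash_welfare v d sp s x"
  unfolding max_nash_welfare_def
proof (intro conjI allI impI)
  fix y
  assume y: "feasible sp s y \<and> (\<forall>i t. 0 < util v d y i t)"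
  then have "(\<Sum>p\<in>UNIV. ln (utility_vector v d y p)) \<le> (\<Sum>p\<in>UNIV. ln (utility_vector v d x p))"
    using pos no_gain by (intro sum_ln_le_if_no_lower_gain) (auto simp: utility_vector_def)
  then show "nash_welfare v d y \<le> nash_welfare v d x"
    by (simp add: nash_welfare_eq_sum_ln divide_right_mono)
qed (use assms in auto)

lemma leximin_optimal_if_no_lower_gain:
  assumes "feasible sp s x"
    and "\<And>y. feasible sp s y \<Longrightarrow> no_lower_gain (utility_vector v d y) (utility_vector v d x)"
  shows "leximin_optimal v d sp s x"
  using assms not_leximin_greater_if_no_lower_gain
  unfolding leximin_optimal_def utility_vector_def by blast

theorem corollary1:
  fixes v :: "'b::finite \<Rightarrow> 'j::finite \<Rightarrow> real"
    and d :: "'b \<Rightarrow> 't::finite \<Rightarrow> real"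
    and sp :: "'j \<Rightarrow> 't \<Rightarrow> real"
    and s :: "'j \<Rightarrow> real"
  assumes "\<forall>j t. sp j t \<ge> 0"
    and "\<forall>j. s j \<ge> 0"
    and "\<forall>i j. v i j \<in> {0, 1}"
    and "\<forall>i t. d i t \<ge> 0"
    and "\<exists>x. feasible sp s x \<and> (\<forall>i t. util v d x i t > 0)"
  shows "{x. leximin_optimal v d sp s x} = {x. max_nash_welfare v d sp s x}"
proof (rule Collect_cong)
  fix x
  have no_gain: "no_lower_gain (utility_vector v d y) (utility_vector v d x)"
    if "feasible sp s x" "\<And>c. \<not> improvable v d sp s x c" "feasible sp s y" for y
    using no_lower_gain_if_not_improvable[OF that(1) assms(3)] that(2,3) by blast
  show "leximin_optimal v d sp s x \<longleftrightarrow> max_nash_welfare v d sp s x"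
  proof
    assume opt: "leximin_optimal v d sp s x"
    then have feas: "feasible sp s x"
      by (simp add: leximin_optimal_def)
    show "max_nash_welfare v d sp s x"
      by (rule max_nash_welfare_if_no_lower_gain[OF feas utility_pos_if_leximin_optimal[OF opt assms(5)]
            no_gain[OF feas not_improvable_if_leximin_optimal[OF opt]]])
  next
    assume opt: "max_nash_welfare v d sp s x"
    then have feas: "feasible sp s x"
      by (simp add: max_nash_welfare_def)
    show "leximin_optimal v d sp s x"
      by (rule leximin_optimal_if_no_lower_gain[OF feas no_gain[OF feas not_improvable_if_max_nash_welfare[OF opt]]])
  qed
qed

end
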